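(* If $L$ is a finite, simple, modular, complemented lattice, then $\mathsf{C}(L)=\mathsf{Pol}_{0,1}(L)$.
   Context: $L$ has bounds $0,1$. $L$ is simple if its only congruences (compatible equivalence relations) are the identity relation and $L^2$. $L$ is modular if $a\le c$ implies $a\vee(b\wedge c)=(a\vee b)\wedge c$; complemented if every $x$ has $y$ with $x\wedge y=0$, $x\vee y=1$. An $n$-ary aggregation function on $L$ ($n\ge1$) is a nondecreasing map $A:L^n\to L$ with $A(0,\dots,0)=0$, $A(1,\dots,1)=1$; $\mathsf{C}(L)$ is the set of all of them. Polynomials on $L$ are functions $L^n\to L$ built from projections and constants by finitely many pointwise joins and meets; $\mathsf{Pol}_{0,1}(L)$ is the set of polynomials preserving $0$ and $1$. *)

theory Defs
  imports Main
begin

definition lattice_congruence :: "('a::lattice \<times> 'a) set \<Rightarrow> bool" where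
  "lattice_congruence \<theta> \<longleftrightarrow> equiv UNIV \<theta> \<and>
     (\<forall>a b c d. (a, b) \<in> \<theta> \<and> (c, d) \<in> \<theta> \<longrightarrow>
        (sup a c, sup b d) \<in> \<theta> \<and> (inf a c, inf b d) \<in> \<theta>)"

definition simple_lattice :: "'a::lattice itself \<Rightarrow> bool" where
  "simple_lattice _ \<longleftrightarrow> (\<forall>\<theta> :: ('a \<times> 'a) set. lattice_congruence \<theta> \<longrightarrow> \<theta> = Id \<or> \<theta> = UNIV)"

definition modular_lattice :: "'a::lattice itself \<Rightarrow> bool" where
  "modular_lattice _ \<longleftrightarrow> (\<forall>a b c :: 'a. a \<le> c \<longrightarrow> sup a (inf b c) = inf (sup a b) c)"

definition complemented_lattice :: "'a::bounded_lattice itself \<Rightarrow> bool" where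
  "complemented_lattice _ \<longleftrightarrow> (\<forall>x :: 'a. \<exists>y. inf x y = bot \<and> sup x y = top)"

definition aggregation_functions :: "(('n::finite \<Rightarrow> 'a::bounded_lattice) \<Rightarrow> 'a) set" where
  "aggregation_functions = {A. mono A \<and> A (\<lambda>_. bot) = bot \<and> A (\<lambda>_. top) = top}"

inductive_set polynomials :: "(('n \<Rightarrow> 'a::lattice) \<Rightarrow> 'a) set" where
  proj: "(\<lambda>x. x i) \<in> polynomials"
| const: "(\<lambda>x. c) \<in> polynomials"
| join: "f \<in> polynomials \<Longrightarrow> g \<in> polynomials \<Longrightarrow> (\<lambda>x. sup (f x) (g x)) \<in> polynomials"
| meet: "f \<in> polynomials \<Longrightarrow> g \<in> polynomials \<Longrightarrow> (\<lambda>x. inf (f x) (g x)) \<in> polynomials"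

definition polynomials01 :: "(('n \<Rightarrow> 'a::bounded_lattice) \<Rightarrow> 'a) set" where
  "polynomials01 = {p \<in> polynomials. p (\<lambda>_. bot) = bot \<and> p (\<lambda>_. top) = top}"

end

theory Submission
  imports Defs
begin

text \<open>
  A monotone \<open>f\<close> on the finite lattice \<open>L\<^sup>n\<close> is the join over all points \<open>a\<close> of
  \<open>f a \<sqinter> \<chi>\<^sub>a\<close>, where \<open>\<chi>\<^sub>a\<close> is the \<open>0\<close>-\<open>1\<close> indicator of the principal filter \<open>\<up>a\<close>; and \<open>\<chi>\<^sub>a\<close> is the
  meet of the coordinatewise indicators \<open>x \<mapsto> \<chi>\<^sub>a\<^sub>i (x\<^sub>i)\<close>. So it suffices that every unary
  indicator is a unary polynomial, i.e. that for \<open>a \<le> y\<close> failing some unary polynomial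
  maps \<open>y\<close> to \<open>0\<close> and \<open>a\<close> to \<open>1\<close>.

  Let \<open>m\<close> be the greatest unary polynomial with \<open>m 0 = 0\<close>, and \<open>c = m d\<close> for some \<open>d \<noteq> 0\<close>.
  Maximality gives \<open>(c \<squnion> a) \<sqinter> b \<le> c\<close> whenever \<open>a \<sqinter> b = 0\<close>, and with modularity and
  complements this makes \<open>x \<mapsto> x \<squnion> c\<close> a lattice homomorphism. Its kernel is a
  congruence, so by simplicity \<open>c = 0\<close> or \<open>c = 1\<close>, and \<open>d \<le> c\<close> forces \<open>m d = 1\<close>.
  If \<open>a \<le> y\<close> fails and \<open>y'\<close> complements \<open>y\<close>, then \<open>u = y' \<sqinter> (y \<squnion> a) \<noteq> 0\<close> by
  modularity, and \<open>x \<mapsto> m ((x \<squnion> y) \<sqinter> u)\<close> separates.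
\<close>

lemma inf_closed_pointwise_Inf_fin:
  fixes F :: "('b \<Rightarrow> 'a::bounded_lattice) set"
  assumes top: "(\<lambda>_. top) \<in> F"
    and inf: "\<And>f g. f \<in> F \<Longrightarrow> g \<in> F \<Longrightarrow> (\<lambda>x. inf (f x) (g x)) \<in> F"
    and "finite A" and "A \<subseteq> F"
  shows "\<exists>p\<in>F. \<forall>x. p x = Inf_fin (insert top ((\<lambda>f. f x) ` A))"
  using \<open>finite A\<close> \<open>A \<subseteq> F\<close>
proof (induction A rule: finite_induct)
  case empty
  then show ?case using top by auto
next
  case (insert f A)
  then obtain p where p: "p \<in> F" "\<forall>x. p x = Inf_fin (insert top ((\<lambda>f. f x) ` A))"
    by auto
  moreover have "Inf_fin (insert top ((\<lambda>f. f x) ` insert f A)) = inf (f x) (p x)" for x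
    using \<open>finite A\<close> p(2) by (simp add: insert_commute[of top])
  moreover have "(\<lambda>x. inf (f x) (p x)) \<in> F"
    using insert.prems p(1) by (auto intro: inf)
  ultimately show ?case by metis
qed

lemma sup_closed_pointwise_Sup_fin:
  fixes F :: "('b \<Rightarrow> 'a::bounded_lattice) set"
  assumes bot: "(\<lambda>_. bot) \<in> F"
    and sup: "\<And>f g. f \<in> F \<Longrightarrow> g \<in> F \<Longrightarrow> (\<lambda>x. sup (f x) (g x)) \<in> F"
    and "finite A" and "A \<subseteq> F"
  shows "\<exists>p\<in>F. \<forall>x. p x = Sup_fin (insert bot ((\<lambda>f. f x) ` A))"
  using \<open>finite A\<close> \<open>A \<subseteq> F\<close>
proof (induction A rule: finite_induct)
  case empty
  then show ?case using bot by auto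
next
  case (insert f A)
  then obtain p where p: "p \<in> F" "\<forall>x. p x = Sup_fin (insert bot ((\<lambda>f. f x) ` A))"
    by auto
  moreover have "Sup_fin (insert bot ((\<lambda>f. f x) ` insert f A)) = sup (f x) (p x)" for x
    using \<open>finite A\<close> p(2) by (simp add: insert_commute[of bot])
  moreover have "(\<lambda>x. sup (f x) (p x)) \<in> F"
    using insert.prems p(1) by (auto intro: sup)
  ultimately show ?case by metis
qed

lemma inf_closed_principal_filter_indicator:
  fixes F :: "('b::order \<Rightarrow> 'a::bounded_lattice) set"
  assumes top: "(\<lambda>_. top) \<in> F"
    and inf: "\<And>f g. f \<in> F \<Longrightarrow> g \<in> F \<Longrightarrow> (\<lambda>x. inf (f x) (g x)) \<in> F"
    and "finite F" and mono: "\<And>q. q \<in> F \<Longrightarrow> mono q"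
    and separate: "\<And>y. \<not> a \<le> y \<Longrightarrow> \<exists>q\<in>F. q y = bot \<and> q a = top"
  shows "\<exists>p\<in>F. \<forall>y. p y = (if a \<le> y then top else bot)"
proof -
  define A where "A = {q \<in> F. q a = top}"
  have "finite A" "A \<subseteq> F" using \<open>finite F\<close> by (auto simp: A_def)
  then obtain p where p: "p \<in> F" "\<And>y. p y = Inf_fin (insert top ((\<lambda>q. q y) ` A))"
    using inf_closed_pointwise_Inf_fin[OF top inf] by blast
  have "p y = (if a \<le> y then top else bot)" for y
  proof (cases "a \<le> y")
    case True
    then have "top \<le> q y" if "q \<in> A" for q
      using that mono[of q] by (auto simp: A_def dest: monoD)
    then have "top \<le> p y" using \<open>finite A\<close> by (simp add: p(2) Inf_fin.bounded_iff)
    with True show ?thesis by (simp add: top_unique)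
  next
    case False
    then obtain q where q: "q \<in> A" "q y = bot" using separate by (auto simp: A_def)
    have "p y \<le> q y"
      using \<open>finite A\<close> q(1) unfolding p(2) by (intro Inf_fin.coboundedI) auto
    with False q(2) show ?thesis by (simp add: bot_unique)
  qed
  with p(1) show ?thesis by blast
qed

lemma polynomials_mono: "f \<in> polynomials \<Longrightarrow> mono f"
proof (induction rule: polynomials.induct)
  case (proj i)
  show ?case by (rule monoI) (simp add: le_fun_def)
next
  case (const c)
  show ?case by (rule monoI) simp
next
  case (join f g)
  then show ?case by (intro monoI sup_mono) (auto dest: monoD)
next
  case (meet f g)
  then show ?case by (intro monoI inf_mono) (auto dest: monoD)
qed

inductive_set unary_polynomials :: "('a::lattice \<Rightarrow> 'a) set" where
  ident: "(\<lambda>x. x) \<in> unary_polynomials"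
| const: "(\<lambda>x. c) \<in> unary_polynomials"
| join: "f \<in> unary_polynomials \<Longrightarrow> g \<in> unary_polynomials \<Longrightarrow> (\<lambda>x. sup (f x) (g x)) \<in> unary_polynomials"
| meet: "f \<in> unary_polynomials \<Longrightarrow> g \<in> unary_polynomials \<Longrightarrow> (\<lambda>x. inf (f x) (g x)) \<in> unary_polynomials"

lemma unary_polynomials_mono: "f \<in> unary_polynomials \<Longrightarrow> mono f"
proof (induction rule: unary_polynomials.induct)
  case ident
  show ?case by (rule monoI)
next
  case (const c)
  show ?case by (rule monoI) simp
next
  case (join f g)
  then show ?case by (intro monoI sup_mono) (auto dest: monoD)
next
  case (meet f g)
  then show ?case by (intro monoI inf_mono) (auto dest: monoD)
qed

lemma unary_polynomials_comp:
  "f \<in> unary_polynomials \<Longrightarrow> g \<in> unary_polynomials \<Longrightarrow> (\<lambda>x. f (g x)) \<in> unary_polynomials"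
  by (induction rule: unary_polynomials.induct) (auto intro: unary_polynomials.intros)

lemma unary_polynomial_of_coordinate:
  "g \<in> unary_polynomials \<Longrightarrow> (\<lambda>x. g (x i)) \<in> polynomials"
  by (induction rule: unary_polynomials.induct) (auto intro: polynomials.intros)

lemma modular_complemented_sup_inf_distrib:
  fixes c :: "'a::bounded_lattice"
  assumes "modular_lattice TYPE('a)" and "complemented_lattice TYPE('a)"
    and absorb: "\<And>a b. inf a b = bot \<Longrightarrow> inf (sup c a) b \<le> c"
  shows "inf (sup x c) (sup z c) = sup (inf x z) c"
proof (rule antisym)
  have modular: "\<And>a b c::'a. a \<le> c \<Longrightarrow> sup a (inf b c) = inf (sup a b) c"
    using assms(1) by (simp add: modular_lattice_def)
  define w where "w = inf x z"
  obtain w' where w': "inf w w' = bot" "sup w w' = top"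
    using assms(2) by (auto simp: complemented_lattice_def)
  \<comment> \<open>\<open>b\<close> complements \<open>x \<sqinter> z\<close> relative to \<open>z\<close>, so \<open>z = (x \<sqinter> z) \<squnion> b\<close> with \<open>b\<close> disjoint from \<open>x\<close>\<close>
  define b where "b = inf w' z"
  have z: "sup w b = z"
    unfolding b_def using modular[of w z w'] w' by (simp add: w_def)
  have "inf x b = bot"
    using w' by (simp add: b_def w_def inf_assoc inf_left_commute inf_commute)
  then have "inf (sup c x) b \<le> c" by (rule absorb)
  have "inf (sup x c) z = sup w (inf b (sup x c))"
    using modular[of w "sup x c" b] z by (simp add: w_def le_supI1 inf_commute)
  also have "\<dots> \<le> sup w c"
    using \<open>inf (sup c x) b \<le> c\<close> by (auto simp: inf_commute sup_commute intro: le_supI1)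
  finally have "inf (sup x c) z \<le> sup w c" .
  moreover have "inf (sup x c) (sup z c) = sup c (inf z (sup x c))"
    using modular[of c "sup x c" z] by (simp add: inf_commute sup_commute)
  ultimately show "inf (sup x c) (sup z c) \<le> sup (inf x z) c"
    by (simp add: w_def inf_commute)
qed (simp add: le_supI1 sup_mono)

lemma lattice_congruence_sup_kernel:
  fixes c :: "'a::lattice"
  assumes distrib: "\<And>x z. inf (sup x c) (sup z c) = sup (inf x z) c"
  shows "lattice_congruence {(x, y). sup x c = sup y c}"
  unfolding lattice_congruence_def
proof (intro conjI allI impI)
  show "equiv UNIV {(x, y). sup x c = sup y c}"
    by (auto simp: equiv_def refl_on_def sym_def trans_def)
next
  fix a b e f :: 'a
  assume "(a, b) \<in> {(x, y). sup x c = sup y c} \<and> (e, f) \<in> {(x, y). sup x c = sup y c}"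
  then have ab: "sup a c = sup b c" and ef: "sup e c = sup f c" by auto
  have "sup (sup a e) c = sup (sup a c) (sup e c)" by (metis sup_assoc sup_commute sup_left_commute sup.idem)
  also have "\<dots> = sup (sup b f) c" by (metis ab ef sup_assoc sup_commute sup_left_commute sup.idem)
  finally show "(sup a e, sup b f) \<in> {(x, y). sup x c = sup y c}" by simp
  have "sup (inf a e) c = sup (inf b f) c" by (simp add: distrib[symmetric] ab ef)
  then show "(inf a e, inf b f) \<in> {(x, y). sup x c = sup y c}" by simp
qed

lemma simple_lattice_sup_distrib_trivial:
  fixes c :: "'a::bounded_lattice"
  assumes "simple_lattice TYPE('a)"
    and distrib: "\<And>x z. inf (sup x c) (sup z c) = sup (inf x z) c"
  shows "c = bot \<or> c = top"
proof -
  have "{(x, y). sup x c = sup y c} = Id \<or> {(x, y). sup x c = sup y c} = UNIV"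
    using assms(1) lattice_congruence_sup_kernel[OF distrib] by (simp add: simple_lattice_def)
  then show ?thesis
  proof
    assume "{(x, y). sup x c = sup y c} = Id"
    then have "(bot, c) \<in> Id" by auto
    then show ?thesis by simp
  next
    assume "{(x, y). sup x c = sup y c} = UNIV"
    then have "sup bot c = sup top c" by blast
    then show ?thesis by simp
  qed
qed

lemma unary_polynomial_bot_top:
  fixes d :: "'a::{bounded_lattice,finite}"
  assumes "simple_lattice TYPE('a)" and "modular_lattice TYPE('a)"
    and "complemented_lattice TYPE('a)" and "d \<noteq> bot"
  shows "\<exists>r\<in>unary_polynomials. r bot = bot \<and> r d = top"
proof -
  define F where "F = {p \<in> unary_polynomials. p bot = (bot::'a)}"
  have "(\<lambda>_. bot) \<in> F" by (simp add: F_def unary_polynomials.const)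
  moreover have "(\<lambda>x. sup (f x) (g x)) \<in> F" if "f \<in> F" "g \<in> F" for f g
    using that by (simp add: F_def unary_polynomials.join)
  moreover have "finite F" by simp
  ultimately obtain m where m: "m \<in> F" "\<And>x. m x = Sup_fin (insert bot ((\<lambda>f. f x) ` F))"
    using sup_closed_pointwise_Sup_fin[of F F] by blast
  have greatest: "p x \<le> m x" if "p \<in> F" for p x
    unfolding m(2) using that by (intro Sup_fin.coboundedI) auto
  have "inf (sup (m d) a) b \<le> m d" if "inf a b = bot" for a b
  proof -
    have "(\<lambda>x. inf (sup x a) b) \<in> unary_polynomials"
      by (intro unary_polynomials.intros)
    then have "(\<lambda>x. inf (sup (m x) a) b) \<in> F"
      using m(1) that unary_polynomials_comp by (auto simp: F_def)
    then show ?thesis by (rule greatest)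
  qed
  then have "m d = bot \<or> m d = top"
    by (intro simple_lattice_sup_distrib_trivial assms(1) modular_complemented_sup_inf_distrib assms(2,3))
  moreover have "d \<le> m d"
    using greatest[of "\<lambda>x. x"] by (simp add: F_def unary_polynomials.ident)
  ultimately have "m d = top" using \<open>d \<noteq> bot\<close> by (auto simp: bot_unique)
  then show ?thesis using m(1) by (auto simp: F_def)
qed

lemma unary_polynomial_separates:
  fixes a y :: "'a::{bounded_lattice,finite}"
  assumes "simple_lattice TYPE('a)" and "modular_lattice TYPE('a)"
    and "complemented_lattice TYPE('a)" and "\<not> a \<le> y"
  shows "\<exists>q\<in>unary_polynomials. q y = bot \<and> q a = top"
proof -
  obtain y' where y': "inf y y' = bot" "sup y y' = top"
    using assms(3) by (auto simp: complemented_lattice_def)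
  define u where "u = inf y' (sup y a)"
  have "sup y u = inf (sup y y') (sup y a)"
    using assms(2) unfolding modular_lattice_def u_def by simp
  then have "sup y u = sup y a" using y'(2) by simp
  with \<open>\<not> a \<le> y\<close> have "u \<noteq> bot" by (metis sup_bot_right sup.cobounded2)
  then obtain r where r: "r \<in> unary_polynomials" "r bot = bot" "r u = top"
    using unary_polynomial_bot_top assms(1-3) by blast
  have "(\<lambda>x. inf (sup x y) u) \<in> unary_polynomials"
    by (intro unary_polynomials.intros)
  then have "(\<lambda>x. r (inf (sup x y) u)) \<in> unary_polynomials"
    by (rule unary_polynomials_comp[OF r(1)])
  moreover have "inf y u = bot" using y' by (simp add: u_def inf_assoc[symmetric])
  moreover have "inf (sup a y) u = u" by (simp add: u_def sup_commute inf_absorb2)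
  ultimately show ?thesis using r by (intro bexI) simp_all
qed

lemma unary_polynomial_principal_filter_indicator:
  fixes a :: "'a::{bounded_lattice,finite}"
  assumes "simple_lattice TYPE('a)" and "modular_lattice TYPE('a)"
    and "complemented_lattice TYPE('a)"
  shows "\<exists>g\<in>unary_polynomials. \<forall>y. g y = (if a \<le> y then top else bot)"
  using unary_polynomials.const unary_polynomials.meet finite unary_polynomials_mono
    unary_polynomial_separates[OF assms]
  by (rule inf_closed_principal_filter_indicator)

lemma polynomial_principal_filter_indicator:
  fixes a :: "'n::finite \<Rightarrow> 'a::{bounded_lattice,finite}"
  assumes "simple_lattice TYPE('a)" and "modular_lattice TYPE('a)"
    and "complemented_lattice TYPE('a)"
  shows "\<exists>\<chi>\<in>polynomials. \<forall>x. \<chi> x = (if a \<le> x then top else bot)"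
proof (rule inf_closed_principal_filter_indicator)
  fix x :: "'n \<Rightarrow> 'a"
  assume "\<not> a \<le> x"
  then obtain i where "\<not> a i \<le> x i" by (auto simp: le_fun_def)
  obtain g where g: "g \<in> unary_polynomials" "\<And>y. g y = (if a i \<le> y then top else bot)"
    using unary_polynomial_principal_filter_indicator[OF assms] by blast
  have "(\<lambda>x. g (x i)) \<in> polynomials"
    using g(1) by (rule unary_polynomial_of_coordinate)
  with \<open>\<not> a i \<le> x i\<close> show "\<exists>q\<in>polynomials. q x = bot \<and> q a = top"
    by (intro bexI[of _ "\<lambda>x. g (x i)"]) (auto simp: g(2))
qed (use polynomials.const polynomials.meet polynomials_mono in simp_all)

lemma mono_in_polynomials:
  fixes f :: "('n::finite \<Rightarrow> 'a::{bounded_lattice,finite}) \<Rightarrow> 'a"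
  assumes "mono f"
    and indicator: "\<And>a :: 'n \<Rightarrow> 'a. \<exists>\<chi>\<in>polynomials. \<forall>x. \<chi> x = (if a \<le> x then top else bot)"
  shows "f \<in> polynomials"
proof -
  define A where "A = {p \<in> polynomials. \<forall>x. p x \<le> f x}"
  have "finite A" "A \<subseteq> polynomials" by (auto simp: A_def)
  then obtain p where p: "p \<in> polynomials" "\<And>x. p x = Sup_fin (insert bot ((\<lambda>q. q x) ` A))"
    using sup_closed_pointwise_Sup_fin[OF polynomials.const polynomials.join] by blast
  have "p x = f x" for x
  proof (rule antisym)
    show "p x \<le> f x"
      using \<open>finite A\<close> by (simp add: p(2) Sup_fin.bounded_iff A_def)
    obtain \<chi> where \<chi>: "\<chi> \<in> polynomials" "\<And>y. \<chi> y = (if x \<le> y then top else bot)"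
      using indicator[of x] by blast
    have "(\<lambda>y. inf (f x) (\<chi> y)) \<in> polynomials"
      using \<chi>(1) by (intro polynomials.meet polynomials.const)
    moreover have "inf (f x) (\<chi> y) \<le> f y" for y
      using monoD[OF \<open>mono f\<close>, of x y] by (simp add: \<chi>(2))
    ultimately have "(\<lambda>y. inf (f x) (\<chi> y)) \<in> A" by (simp add: A_def)
    then have "inf (f x) (\<chi> x) \<le> p x"
      using \<open>finite A\<close> unfolding p(2) by (intro Sup_fin.coboundedI) auto
    then show "f x \<le> p x" by (simp add: \<chi>(2))
  qed
  with p(1) show ?thesis by (metis ext)
qed

theorem mainTheorem7:
  assumes "simple_lattice TYPE('a::{bounded_lattice, finite})"
    and "modular_lattice TYPE('a)"
    and "complemented_lattice TYPE('a)"
  shows "(aggregation_functions :: (('n::finite \<Rightarrow> 'a) \<Rightarrow> 'a) set) = polynomials01"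
  using polynomials_mono mono_in_polynomials[OF _ polynomial_principal_filter_indicator[OF assms]]
  by (auto simp: aggregation_functions_def polynomials01_def)

end
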